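(* Let $S$ be an average $\tau$-mutation system over $\mathcal{A}=\{a_0,\dots,a_{d-1}\}$ with $\tau>1$, fix $k$, and let the starting word $w$ have length $m\ge k$. Assume $\tau+k-1=\rho(\mathbf{M}^{(k)})$ is an eigenvalue of $\mathbf{M}^{(k)}$ of algebraic multiplicity one. Let $\lambda=\lambda_r+\mathrm{i}\lambda_c$ ($\lambda_r,\lambda_c\in\mathbb{R}$) be an eigenvalue of $\mathbf{M}^{(k)}$ with $\lambda\neq\tau+k-1$, and let $\mathbf{u}=\mathbf{u}_r+\mathrm{i}\mathbf{u}_c$ be a left eigenvector of $\mathbf{M}^{(k)}$ for $\lambda$ ($\mathbf{u}_r,\mathbf{u}_c$ real). Define $X_n=\mathbf{u}_r\cdot\mathbf{ct}^{(k)}_{S(n)}+\mathrm{i}\,\mathbf{u}_c\cdot\mathbf{ct}^{(k)}_{S(n)}$. Then \[\frac{X_n}{n(\tau-1)+m}\xrightarrow{\ P\ }0\quad(n\to\infty).\]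
   Context: Let $\mathcal{A}^\star$ be the finite nonempty words over $\mathcal{A}$. A mutation law assigns to each $a_t$ a finitely supported probability distribution $\mathbb{P}_{a_t}$ on $\mathcal{A}^\star$; $\vartheta(a_t)$ is a random word with law $\mathbb{P}_{a_t}$; average $\tau$-mutation law: $\mathbb{E}|\vartheta(a_t)|=\tau$ for all $t$. A mutation step on $w=w_0\cdots w_{m-1}$ picks $i$ uniformly in $\{0,\dots,m-1\}$ and replaces $w_i$ by an independent sample of $\vartheta(w_i)$; $S(0)=w$, $S(n)=\vartheta(S(n-1))$ with independent randomness each step. $\mathrm{ct}_v(u)$ is the number of $i\in\{0,\dots,|v|-1\}$ with $v_i\cdots v_{i+|u|-1}=u$ (cyclic mod $|v|$); $\mathbf{ct}^{(k)}_v=(\mathrm{ct}_v(u))_{u\in\mathcal{A}^k}$. The $k$-substitution matrix: \[\mathbf{M}^{(k)}_{u,v}=\sum_{l\ge1}\sum_{\eta\in\mathcal{A}^l}\sum_{t\in[d]}\Pr(\vartheta(a_t)=\eta)\Big(\sum_{j=1}^{k-1}\mathbb{1}[v_j=a_t]\,\mathbb{1}\big[(v_0\cdots v_{j-1}\eta v_{j+1}\cdots v_{k-1})_{[k]}=u\big]+\sum_{j=0}^{l-1}\mathbb{1}[v_0=a_t]\,\mathbb{1}\big[(\eta v_1\cdots v_{k-1})_{j+[k]}=u\big]\Big),\] where $x_{j+[k]}=x_j\cdots x_{j+k-1}$ and $x_{[k]}$ is the first $k$ symbols of $x$; its spectral radius is $\tau+k-1$. $\xrightarrow{P}$ denotes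 convergence in probability. *)

theory Defs
  imports "HOL-Probability.Probability_Mass_Function" "Jordan_Normal_Form.Char_Poly"
begin

definition mutation_law :: "('a \<Rightarrow> 'a list pmf) \<Rightarrow> bool" where
  "mutation_law P \<longleftrightarrow> (\<forall>a. finite (set_pmf (P a)) \<and> [] \<notin> set_pmf (P a))"

definition avg_mutation_law :: "('a \<Rightarrow> 'a list pmf) \<Rightarrow> real \<Rightarrow> bool" where
  "avg_mutation_law P \<tau> \<longleftrightarrow> mutation_law P \<and>
     (\<forall>a. measure_pmf.expectation (P a) (\<lambda>\<eta>. real (length \<eta>)) = \<tau>)"

definition mut_step :: "('a \<Rightarrow> 'a list pmf) \<Rightarrow> 'a list \<Rightarrow> 'a list pmf" where
  "mut_step P w = bind_pmf (pmf_of_set {..<length w})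
      (\<lambda>i. map_pmf (\<lambda>\<eta>. take i w @ \<eta> @ drop (Suc i) w) (P (w ! i)))"

primrec mut_system :: "('a \<Rightarrow> 'a list pmf) \<Rightarrow> 'a list \<Rightarrow> nat \<Rightarrow> 'a list pmf" where
  "mut_system P w 0 = return_pmf w"
| "mut_system P w (Suc n) = bind_pmf (mut_system P w n) (mut_step P)"

definition ct :: "'a list \<Rightarrow> 'a list \<Rightarrow> nat" where
  "ct v u = card {i. i < length v \<and>
      map (\<lambda>j. v ! ((i + j) mod length v)) [0..<length u] = u}"

definition words :: "nat \<Rightarrow> 'a list set" where
  "words k = {xs. length xs = k}"

text \<open>A fixed enumeration of A^k (the spectral data do not depend on the choice).\<close>
definition word_enum :: "nat \<Rightarrow> nat \<Rightarrow> ('a::finite) list" where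
  "word_enum k = (SOME f. bij_betw f {..<card (words k :: 'a list set)} (words k))"

definition subst_entry :: "('a::finite \<Rightarrow> 'a list pmf) \<Rightarrow> nat \<Rightarrow> 'a list \<Rightarrow> 'a list \<Rightarrow> real" where
  "subst_entry P k u v =
     (\<Sum>a\<in>UNIV. \<Sum>\<eta>\<in>set_pmf (P a). pmf (P a) \<eta> *
        ((\<Sum>j\<in>{1..<k}. (if v ! j = a then 1 else 0) *
             (if take k (take j v @ \<eta> @ drop (Suc j) v) = u then 1 else 0))
         + (\<Sum>j<length \<eta>. (if v ! 0 = a then 1 else 0) *
             (if take k (drop j (\<eta> @ drop 1 v)) = u then 1 else 0))))"

definition subst_matrix :: "('a::finite \<Rightarrow> 'a list pmf) \<Rightarrow> nat \<Rightarrow> complex mat" where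
  "subst_matrix P k = mat (card (words k :: 'a list set)) (card (words k :: 'a list set))
     (\<lambda>(i, j). complex_of_real (subst_entry P k (word_enum k i) (word_enum k j)))"

definition alg_mult :: "complex mat \<Rightarrow> complex \<Rightarrow> nat" where
  "alg_mult A x = order x (char_poly A)"

definition left_eigenvector :: "complex mat \<Rightarrow> complex vec \<Rightarrow> complex \<Rightarrow> bool" where
  "left_eigenvector A u x \<longleftrightarrow> eigenvector (transpose_mat A) u x"

definition X_stat :: "nat \<Rightarrow> complex vec \<Rightarrow> ('a::finite) list \<Rightarrow> complex" where
  "X_stat k u v =
     complex_of_real (\<Sum>i<dim_vec u. Re (u $ i) * real (ct v (word_enum k i)))
     + \<i> * complex_of_real (\<Sum>i<dim_vec u. Im (u $ i) * real (ct v (word_enum k i)))"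

end

theory Submission
  imports Defs "HOL-Analysis.Harmonic_Numbers"
begin

text \<open>
  Write X(z) as the sum of U over the cyclic windows of length k of the word z, where U is the
  left eigenvector u read as a function on k-letter words.  Averaging the effect of one mutation
  over its position and its random replacement word turns U into U M^(k) = \<lambda> U, so a mutation
  step of a word of length L changes X by (\<lambda> - k)/L \<cdot> X in expectation, while L grows by \<tau> - 1.
  Every column of M^(k) sums to \<tau> + k - 1, hence |\<lambda>| \<le> \<tau> + k - 1, and \<lambda> \<noteq> \<tau> + k - 1 forces
  Re \<lambda> < \<tau> + k - 1.  With this margin, |X|^2/L^2 + A/L decreases in expectation by a factor
  1 - \<mu>/L per step for suitable A, \<mu> > 0; as L grows at most linearly in n, the product of these
  factors tends to 0, and Markov's inequality gives the convergence in probability.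
\<close>

section \<open>Cyclic windows\<close>

definition window :: "nat \<Rightarrow> 'a list \<Rightarrow> nat \<Rightarrow> 'a list" where
  "window k z p = map (\<lambda>j. z ! ((p + j) mod length z)) [0..<k]"

lemma length_window [simp]: "length (window k z p) = k"
  by (simp add: window_def)

lemma nth_window: "j < k \<Longrightarrow> window k z p ! j = z ! ((p + j) mod length z)"
  by (simp add: window_def)

lemma window_mod: "window k z (p mod length z) = window k z p"
  unfolding window_def by (simp add: mod_add_left_eq)

lemma window_add_length: "window k z (p + length z) = window k z p"
  by (metis mod_add_self2 window_mod)

lemma window_eq_take_drop:
  assumes "p < length z" and "k \<le> length z"
  shows "window k z p = take k (drop p (z @ z))"
proof (rule nth_equalityI)
  fix t assume "t < length (window k z p)"
  with assms show "window k z p ! t = take k (drop p (z @ z)) ! t"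
    by (auto simp: window_def nth_append mod_if add.commute)
qed (use assms in simp)

lemma window_rotate: "z \<noteq> [] \<Longrightarrow> window k (rotate i z) p = window k z (i + p)"
  unfolding window_def by (auto simp: nth_rotate mod_add_right_eq add.assoc)

definition window_sum :: "nat \<Rightarrow> ('a list \<Rightarrow> 'b::comm_monoid_add) \<Rightarrow> 'a list \<Rightarrow> 'b" where
  "window_sum k U z = (\<Sum>p<length z. U (window k z p))"

lemma sum_lessThan_shift_periodic:
  fixes F :: "nat \<Rightarrow> 'b::cancel_comm_monoid_add"
  assumes periodic: "\<And>p. F (p + n) = F p"
  shows "(\<Sum>p<n. F (c + p)) = (\<Sum>p<n. F p)"
proof (induction c)
  case (Suc c)
  have "F c + (\<Sum>p<n. F (Suc c + p)) = (\<Sum>p<n. F (c + p)) + F (c + n)"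
    using sum.lessThan_Suc_shift[of "\<lambda>p. F (c + p)" n] sum.lessThan_Suc[of "\<lambda>p. F (c + p)" n]
    by simp
  then show ?case
    using Suc periodic[of c] by (simp add: add.commute)
qed simp

lemma window_sum_rotate:
  fixes U :: "'a list \<Rightarrow> 'b::cancel_comm_monoid_add"
  shows "window_sum k U (rotate i z) = window_sum k U z"
proof (cases "z = []")
  case False
  then show ?thesis
    unfolding window_sum_def
    by (simp add: window_rotate sum_lessThan_shift_periodic[where F = "\<lambda>p. U (window k z p)"]
        window_add_length)
qed simp

lemma norm_window_sum_le:
  fixes U :: "'a list \<Rightarrow> 'b::real_normed_vector"
  shows "(\<And>x. norm (U x) \<le> B) \<Longrightarrow> norm (window_sum k U z) \<le> real (length z) * B"
  unfolding window_sum_def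
  by (intro order_trans[OF norm_sum] order_trans[OF sum_bounded_above[where K = B]]) simp_all

section \<open>A single mutation\<close>

definition mutate :: "'a list \<Rightarrow> nat \<Rightarrow> 'a list \<Rightarrow> 'a list" where
  "mutate v i \<eta> = take i v @ \<eta> @ drop (Suc i) v"

lemma length_mutate: "i < length v \<Longrightarrow> length (mutate v i \<eta>) = length v - 1 + length \<eta>"
  by (simp add: mutate_def)

lemma rotate_mutate:
  assumes "i < length v" and "\<eta> \<noteq> []"
  shows "rotate i (mutate v i \<eta>) = \<eta> @ drop (Suc i) v @ take i v"
proof -
  have "i mod length (mutate v i \<eta>) = i"
    using assms by (cases \<eta>) (auto simp: mutate_def)
  then show ?thesis
    using assms by (simp add: rotate_drop_take mutate_def)
qed

lemma rotate_nth_Cons: "i < length v \<Longrightarrow> rotate i v = v ! i # drop (Suc i) v @ take i v"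
  by (simp add: rotate_drop_take Cons_nth_drop_Suc)

(* The two kinds of windows in the definition of M^(k): the first letter of y, resp. its j-th
   letter with 0 < j, is replaced by the word \<eta>. *)
definition head_window :: "nat \<Rightarrow> nat \<Rightarrow> 'a list \<Rightarrow> 'a list \<Rightarrow> 'a list" where
  "head_window k p \<eta> y = take k (drop p (\<eta> @ drop 1 y))"

definition inner_window :: "nat \<Rightarrow> nat \<Rightarrow> 'a list \<Rightarrow> 'a list \<Rightarrow> 'a list" where
  "inner_window k j \<eta> y = take k (take j y @ \<eta> @ drop (Suc j) y)"

lemma sum_lessThan_add:
  "(\<Sum>i<m + n. f i) = (\<Sum>i<m. f i) + (\<Sum>i<n. f (m + i))" for m n :: nat
  by (induction n) (auto simp: add.assoc)

lemma sum_lessThan_diff_reindex: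
  "(\<Sum>i<k - 1. f (n + i)) = (\<Sum>j\<in>{1..<k}. f (n + k - 1 - j))" for k n :: nat
  by (rule sum.reindex_bij_witness[where i = "\<lambda>j. k - 1 - j" and j = "\<lambda>i. k - 1 - i"])
     (auto intro!: arg_cong[where f = f])

(* Replacing the first letter a of a # w by \<eta> gives \<eta> @ w; only the windows that meet the
   replaced letter change. *)
context
  fixes k :: nat and a :: 'a and w \<eta> :: "'a list"
  assumes k: "1 \<le> k" "k \<le> Suc (length w)" and \<eta>: "\<eta> \<noteq> []"
begin

lemma window_append_head:
  assumes "p < length \<eta>"
  shows "window k (\<eta> @ w) p = head_window k p \<eta> (window k (a # w) 0)"
proof -
  have "window k (a # w) 0 = a # take (k - 1) w"
    using k by (simp add: window_eq_take_drop take_Cons')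
  moreover have "k + p - length \<eta> \<le> k - 1"
    using assms k by linarith
  ultimately show ?thesis
    using assms k \<eta> by (simp add: window_eq_take_drop head_window_def min_absorb1)
qed

lemma window_append_middle:
  assumes "q + k \<le> length w"
  shows "window k (\<eta> @ w) (length \<eta> + q) = window k (a # w) (Suc q)"
  using assms k \<eta> by (simp add: window_eq_take_drop)

lemma window_append_tail:
  assumes "j \<in> {1..<k}"
  shows "window k (\<eta> @ w) (length \<eta> + length w - j)
           = inner_window k j \<eta> (window k (a # w) (Suc (length w) - j))"
    and "window k (a # w) (Suc (length w) - j) ! j = a"
proof -
  have j: "1 \<le> j" "j < k" using assms by auto
  have y: "window k (a # w) (Suc (length w) - j) = drop (length w - j) w @ a # take (k - j - 1) w"
  proof -
    have "Suc (length w) - j = Suc (length w - j)" and "k - j = Suc (k - Suc j)"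
      using j k by auto
    then show ?thesis
      using j k by (simp add: window_eq_take_drop)
  qed
  then show "window k (a # w) (Suc (length w) - j) ! j = a"
    using j k by (simp add: nth_append)
  show "window k (\<eta> @ w) (length \<eta> + length w - j)
           = inner_window k j \<eta> (window k (a # w) (Suc (length w) - j))"
  proof -
    have "length \<eta> + length w - j = length \<eta> + (length w - j)"
      using j k by auto
    moreover have "k - j - length \<eta> \<le> k - Suc j"
      using \<eta> by (cases \<eta>) auto
    ultimately show ?thesis
      using j k \<eta> by (simp add: window_eq_take_drop inner_window_def y min_absorb1)
  qed
qed

lemma window_sum_append:
  "window_sum k U (\<eta> @ w) =
     (\<Sum>p<length \<eta>. U (head_window k p \<eta> (window k (a # w) 0)))
     + (\<Sum>q<Suc (length w) - k. U (window k (a # w) (Suc q)))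
     + (\<Sum>j\<in>{1..<k}. U (inner_window k j \<eta> (window k (a # w) (Suc (length w) - j))))"
proof -
  have len: "length (\<eta> @ w) = length \<eta> + (Suc (length w) - k) + (k - 1)"
    using k by simp
  have tail: "length \<eta> + (Suc (length w) - k) + k - 1 - j = length \<eta> + length w - j" for j
    using k by simp
  have "window_sum k U (\<eta> @ w) = (\<Sum>p<length \<eta>. U (window k (\<eta> @ w) p))
      + (\<Sum>q<Suc (length w) - k. U (window k (\<eta> @ w) (length \<eta> + q)))
      + (\<Sum>i<k - 1. U (window k (\<eta> @ w) (length \<eta> + (Suc (length w) - k) + i)))"
    unfolding window_sum_def len sum_lessThan_add ..
  also have "(\<Sum>i<k - 1. U (window k (\<eta> @ w) (length \<eta> + (Suc (length w) - k) + i)))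
      = (\<Sum>j\<in>{1..<k}. U (window k (\<eta> @ w) (length \<eta> + (Suc (length w) - k) + k - 1 - j)))"
    by (rule sum_lessThan_diff_reindex)
  also have "\<dots> = (\<Sum>j\<in>{1..<k}. U (inner_window k j \<eta> (window k (a # w) (Suc (length w) - j))))"
    by (intro sum.cong refl, simp only: tail) (simp add: window_append_tail)
  also have "(\<Sum>q<Suc (length w) - k. U (window k (\<eta> @ w) (length \<eta> + q)))
      = (\<Sum>q<Suc (length w) - k. U (window k (a # w) (Suc q)))"
    by (intro sum.cong refl) (simp add: window_append_middle)
  also have "(\<Sum>p<length \<eta>. U (window k (\<eta> @ w) p))
      = (\<Sum>p<length \<eta>. U (head_window k p \<eta> (window k (a # w) 0)))"
    by (intro sum.cong refl) (simp add: window_append_head)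
  finally show ?thesis .
qed

end

lemma window_sum_Cons:
  assumes k: "1 \<le> k" "k \<le> Suc (length w)"
  shows "window_sum k U (a # w) = U (window k (a # w) 0)
     + (\<Sum>q<Suc (length w) - k. U (window k (a # w) (Suc q)))
     + (\<Sum>j\<in>{1..<k}. U (window k (a # w) (Suc (length w) - j)))"
proof -
  have len: "length (a # w) = 1 + (Suc (length w) - k) + (k - 1)"
    using k by simp
  have tail: "1 + (Suc (length w) - k) + k - 1 - j = Suc (length w) - j" for j
    using k by simp
  have "window_sum k U (a # w) = U (window k (a # w) 0)
      + (\<Sum>q<Suc (length w) - k. U (window k (a # w) (1 + q)))
      + (\<Sum>i<k - 1. U (window k (a # w) (1 + (Suc (length w) - k) + i)))"
    unfolding window_sum_def len sum_lessThan_add by simp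
  also have "(\<Sum>i<k - 1. U (window k (a # w) (1 + (Suc (length w) - k) + i)))
      = (\<Sum>j\<in>{1..<k}. U (window k (a # w) (1 + (Suc (length w) - k) + k - 1 - j)))"
    by (rule sum_lessThan_diff_reindex)
  finally show ?thesis
    by (simp only: tail) simp
qed

lemma window_sum_mutate:
  fixes U :: "'a list \<Rightarrow> 'b::ab_group_add"
  assumes k: "1 \<le> k" "k \<le> length v" and i: "i < length v" and \<eta>: "\<eta> \<noteq> []"
  shows "window_sum k U (mutate v i \<eta>) - window_sum k U v =
    (\<Sum>p<length \<eta>. U (head_window k p \<eta> (window k v i))) - U (window k v i)
    + (\<Sum>j\<in>{1..<k}. U (inner_window k j \<eta> (window k v (i + (length v - j))))
                     - U (window k v (i + (length v - j))))"
proof -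
  define w where "w = drop (Suc i) v @ take i v"
  have lw: "Suc (length w) = length v"
    using i by (simp add: w_def)
  have rot: "rotate i v = v ! i # w"
    using i by (simp add: w_def rotate_nth_Cons)
  have "v \<noteq> []"
    using i by auto
  then have "window k (v ! i # w) p = window k v (i + p)" for p
    using window_rotate[of v k i p] by (simp add: rot)
  moreover have "window_sum k U (mutate v i \<eta>) = window_sum k U (\<eta> @ w)"
    using window_sum_rotate[of k U i "mutate v i \<eta>"] rotate_mutate[OF i \<eta>] by (simp add: w_def)
  moreover have "window_sum k U v = window_sum k U (v ! i # w)"
    using window_sum_rotate[of k U i v] by (simp add: rot)
  ultimately show ?thesis
    using window_sum_append[where a = "v ! i" and w = w and U = U]
      window_sum_Cons[where a = "v ! i" and w = w and U = U] k \<eta> lw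
    by (simp add: sum_subtractf algebra_simps)
qed

lemma norm_window_sum_mutate_le:
  fixes U :: "'a list \<Rightarrow> 'b::real_normed_vector"
  assumes k: "1 \<le> k" "k \<le> length v" and i: "i < length v" and \<eta>: "\<eta> \<noteq> []"
    and bound: "\<And>x. norm (U x) \<le> B"
  shows "norm (window_sum k U (mutate v i \<eta>) - window_sum k U v) \<le> (real (length \<eta>) + 2 * real k) * B"
proof -
  have B: "0 \<le> B"
    using bound[of undefined] norm_ge_zero[of "U undefined"] by linarith
  have head: "norm (\<Sum>p<length \<eta>. U (head_window k p \<eta> (window k v i))) \<le> real (length \<eta>) * B"
    by (intro order_trans[OF norm_sum] order_trans[OF sum_bounded_above[where K = B]])
       (simp_all add: bound)
  have "norm (U y - U y') \<le> 2 * B" for y y'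
    using norm_triangle_ineq4[of "U y" "U y'"] bound[of y] bound[of y'] by linarith
  then have inner: "norm (\<Sum>j\<in>{1..<k}. U (inner_window k j \<eta> (window k v (i + (length v - j))))
      - U (window k v (i + (length v - j)))) \<le> (real k - 1) * (2 * B)"
    using k by (intro order_trans[OF norm_sum] order_trans[OF sum_bounded_above[where K = "2 * B"]])
       (simp_all add: of_nat_diff)
  have "norm (window_sum k U (mutate v i \<eta>) - window_sum k U v)
      \<le> real (length \<eta>) * B + B + (real k - 1) * (2 * B)"
    unfolding window_sum_mutate[OF k i \<eta>]
    using head inner bound[of "window k v i"]
    by (smt (verit) norm_triangle_ineq norm_triangle_ineq4)
  also have "\<dots> \<le> (real (length \<eta>) + 2 * real k) * B"
    using B by (simp add: algebra_simps)
  finally show ?thesis .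
qed

definition fin_expectation :: "'b pmf \<Rightarrow> ('b \<Rightarrow> 'c::real_vector) \<Rightarrow> 'c" where
  "fin_expectation M g = (\<Sum>x\<in>set_pmf M. pmf M x *\<^sub>R g x)"

lemma expectation_eq_fin_expectation:
  fixes g :: "'b \<Rightarrow> 'c::{banach, second_countable_topology}"
  shows "finite (set_pmf M) \<Longrightarrow> measure_pmf.expectation M g = fin_expectation M g"
  unfolding fin_expectation_def by (rule integral_measure_pmf) auto

lemma fin_expectation_add:
  "fin_expectation M (\<lambda>x. f x + g x) = fin_expectation M f + fin_expectation M g"
  unfolding fin_expectation_def by (simp add: scaleR_add_right sum.distrib)

lemma fin_expectation_diff:
  "fin_expectation M (\<lambda>x. f x - g x) = fin_expectation M f - fin_expectation M g"
  unfolding fin_expectation_def by (simp add: scaleR_diff_right sum_subtractf)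

lemma fin_expectation_sum:
  "fin_expectation M (\<lambda>x. \<Sum>j\<in>J. f j x) = (\<Sum>j\<in>J. fin_expectation M (f j))"
  unfolding fin_expectation_def by (simp add: scaleR_sum_right sum.swap[of _ J])

lemma fin_expectation_mult_left:
  fixes g :: "'b \<Rightarrow> 'c::real_algebra"
  shows "fin_expectation M (\<lambda>x. c * g x) = c * fin_expectation M g"
  unfolding fin_expectation_def by (simp add: sum_distrib_left mult_scaleR_right)

lemma fin_expectation_mult_right:
  "fin_expectation M (\<lambda>x. f x * c) = fin_expectation M f * (c :: real)"
  unfolding fin_expectation_def by (simp add: sum_distrib_right mult.assoc)

lemma fin_expectation_Re: "fin_expectation M (\<lambda>x. Re (g x)) = Re (fin_expectation M g)"
  unfolding fin_expectation_def by (simp add: Re_sum)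

lemma fin_expectation_const: "finite (set_pmf M) \<Longrightarrow> fin_expectation M (\<lambda>x. c) = c"
  unfolding fin_expectation_def by (simp flip: scaleR_sum_left add: sum_pmf_eq_1)

lemma fin_expectation_cong:
  "(\<And>x. x \<in> set_pmf M \<Longrightarrow> f x = g x) \<Longrightarrow> fin_expectation M f = fin_expectation M g"
  unfolding fin_expectation_def by (auto intro: sum.cong)

lemma fin_expectation_mono:
  fixes f g :: "'b \<Rightarrow> real"
  shows "(\<And>x. x \<in> set_pmf M \<Longrightarrow> f x \<le> g x) \<Longrightarrow> fin_expectation M f \<le> fin_expectation M g"
  unfolding fin_expectation_def by (auto intro!: sum_mono mult_left_mono)

lemma norm_fin_expectation_le:
  assumes "\<And>x. x \<in> set_pmf M \<Longrightarrow> norm (g x) \<le> B x"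
  shows "norm (fin_expectation M g) \<le> fin_expectation M B"
  unfolding fin_expectation_def
  by (rule order_trans[OF norm_sum sum_mono]) (simp add: assms mult_left_mono)

lemma sum_fin_expectation_scaleR:
  "(\<Sum>y\<in>Y. fin_expectation M (f y) *\<^sub>R U y) = fin_expectation M (\<lambda>x. \<Sum>y\<in>Y. f y x *\<^sub>R U y)"
  unfolding fin_expectation_def
  by (simp add: scaleR_sum_left scaleR_sum_right sum.swap[of _ Y])

lemma fin_expectation_bind_pmf:
  fixes g :: "'c \<Rightarrow> 'd::{banach, second_countable_topology}"
  assumes "finite (set_pmf M)" and "\<And>x. x \<in> set_pmf M \<Longrightarrow> finite (set_pmf (f x))"
  shows "fin_expectation (bind_pmf M f) g = fin_expectation M (\<lambda>x. fin_expectation (f x) g)"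
proof -
  have "finite (set_pmf (bind_pmf M f))"
    using assms by (simp add: set_bind_pmf)
  then show ?thesis
    using pmf_expectation_bind[OF assms(1) assms(2) subset_refl, where h = g] assms
    by (simp add: expectation_eq_fin_expectation fin_expectation_def)
qed

lemma fin_expectation_map_pmf:
  fixes g :: "'c \<Rightarrow> 'd::{banach, second_countable_topology}"
  shows "finite (set_pmf M) \<Longrightarrow> fin_expectation (map_pmf h M) g = fin_expectation M (\<lambda>x. g (h x))"
  by (simp flip: expectation_eq_fin_expectation)

lemma fin_expectation_pmf_of_set:
  fixes g :: "'c \<Rightarrow> 'd::{banach, second_countable_topology}"
  shows "finite A \<Longrightarrow> A \<noteq> {} \<Longrightarrow> fin_expectation (pmf_of_set A) g = (\<Sum>x\<in>A. g x) /\<^sub>R real (card A)"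
  by (simp add: fin_expectation_def scaleR_sum_right inverse_eq_divide)

lemma prob_le_fin_expectation:
  fixes u :: "'b \<Rightarrow> real"
  assumes finite: "finite (set_pmf M)" and u: "\<And>x. x \<in> set_pmf M \<Longrightarrow> 0 \<le> u x"
    and event: "\<And>x. x \<in> set_pmf M \<Longrightarrow> x \<in> E \<Longrightarrow> 1 \<le> u x"
  shows "measure_pmf.prob M E \<le> fin_expectation M u"
proof -
  have "measure_pmf.prob M E = measure_pmf.prob M (E \<inter> set_pmf M)"
    by (simp add: measure_Int_set_pmf)
  also have "\<dots> \<le> measure_pmf.prob M {x\<in>space (measure_pmf M). 1 \<le> u x}"
    using event by (intro measure_pmf.finite_measure_mono) auto
  also have "\<dots> \<le> measure_pmf.expectation M u / 1"
    using u finite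
    by (intro integral_Markov_inequality_measure[where A = UNIV])
       (simp_all add: integrable_measure_pmf_finite AE_measure_pmf_iff)
  finally show ?thesis
    using finite by (simp add: expectation_eq_fin_expectation)
qed

lemma avg_mutation_law_fin_expectation:
  "avg_mutation_law P \<tau> \<Longrightarrow> fin_expectation (P a) (\<lambda>\<eta>. real (length \<eta>)) = \<tau>"
  by (simp add: avg_mutation_law_def mutation_law_def flip: expectation_eq_fin_expectation)

section \<open>The substitution matrix acting on functions of words\<close>

(* The row vector U M^(k), indexed by words instead of their enumeration. *)
definition subst_action :: "nat \<Rightarrow> ('a \<Rightarrow> 'a list pmf) \<Rightarrow> ('a list \<Rightarrow> 'b::real_vector) \<Rightarrow> 'a list \<Rightarrow> 'b" where
  "subst_action k P U y =
     fin_expectation (P (y ! 0)) (\<lambda>\<eta>. \<Sum>p<length \<eta>. U (head_window k p \<eta> y))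
     + (\<Sum>j\<in>{1..<k}. fin_expectation (P (y ! j)) (\<lambda>\<eta>. U (inner_window k j \<eta> y)))"

lemma subst_entry_eq_fin_expectation:
  "subst_entry P k x y =
     fin_expectation (P (y ! 0)) (\<lambda>\<eta>. \<Sum>p<length \<eta>. of_bool (head_window k p \<eta> y = x))
     + (\<Sum>j\<in>{1..<k}. fin_expectation (P (y ! j)) (\<lambda>\<eta>. of_bool (inner_window k j \<eta> y = x)))"
proof -
  define \<delta> :: "'a \<Rightarrow> 'a \<Rightarrow> real" where "\<delta> b a = (if b = a then 1 else 0)" for b a
  have pick: "(\<Sum>a\<in>UNIV. \<Sum>\<eta>\<in>set_pmf (P a). pmf (P a) \<eta> * (\<delta> b a * g \<eta>)) = fin_expectation (P b) g"
    for b and g :: "'a list \<Rightarrow> real"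
  proof -
    have "(\<Sum>a\<in>UNIV. \<Sum>\<eta>\<in>set_pmf (P a). pmf (P a) \<eta> * (\<delta> b a * g \<eta>))
        = (\<Sum>a\<in>UNIV. if b = a then \<Sum>\<eta>\<in>set_pmf (P a). pmf (P a) \<eta> * g \<eta> else 0)"
      by (intro sum.cong) (auto simp: \<delta>_def)
    then show ?thesis
      by (simp add: fin_expectation_def)
  qed
  define I where "I a \<eta> = (\<Sum>j\<in>{1..<k}. \<delta> (y ! j) a * of_bool (inner_window k j \<eta> y = x))" for a \<eta>
  define H where "H a \<eta> = \<delta> (y ! 0) a * (\<Sum>p<length \<eta>. of_bool (head_window k p \<eta> y = x))" for a \<eta>
  have "subst_entry P k x y
      = (\<Sum>a\<in>UNIV. \<Sum>\<eta>\<in>set_pmf (P a). pmf (P a) \<eta> * H a \<eta> + pmf (P a) \<eta> * I a \<eta>)"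
    unfolding subst_entry_def H_def I_def \<delta>_def head_window_def inner_window_def of_bool_def
    by (simp only: sum_distrib_left distrib_left ac_simps)
  also have "\<dots> = (\<Sum>a\<in>UNIV. \<Sum>\<eta>\<in>set_pmf (P a). pmf (P a) \<eta> * H a \<eta>)
      + (\<Sum>a\<in>UNIV. \<Sum>\<eta>\<in>set_pmf (P a). pmf (P a) \<eta> * I a \<eta>)"
    by (simp only: sum.distrib)
  also have "(\<Sum>a\<in>UNIV. \<Sum>\<eta>\<in>set_pmf (P a). pmf (P a) \<eta> * I a \<eta>)
      = (\<Sum>j\<in>{1..<k}. \<Sum>a\<in>UNIV. \<Sum>\<eta>\<in>set_pmf (P a).
           pmf (P a) \<eta> * (\<delta> (y ! j) a * of_bool (inner_window k j \<eta> y = x)))"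
    unfolding I_def sum_distrib_left by (rule trans[OF sum.cong[OF refl sum.swap] sum.swap])
  finally show ?thesis
    unfolding H_def pick by simp
qed

lemma finite_words: "finite (words k :: 'a::finite list set)"
  using finite_lists_length_eq[of "UNIV :: 'a set" k] by (simp add: words_def)

lemma head_window_in_words: "p < length \<eta> \<Longrightarrow> 1 \<le> k \<Longrightarrow> length y = k \<Longrightarrow> head_window k p \<eta> y \<in> words k"
  by (auto simp: head_window_def words_def)

lemma inner_window_in_words: "\<eta> \<noteq> [] \<Longrightarrow> j < k \<Longrightarrow> length y = k \<Longrightarrow> inner_window k j \<eta> y \<in> words k"
  by (cases \<eta>) (auto simp: inner_window_def words_def)

lemma sum_of_bool_eq_scaleR:
  fixes U :: "'a \<Rightarrow> 'b::real_vector"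
  assumes "finite X" and "z \<in> X"
  shows "(\<Sum>x\<in>X. of_bool (z = x) *\<^sub>R U x) = U z"
proof -
  have "(\<Sum>x\<in>X. of_bool (z = x) *\<^sub>R U x) = (\<Sum>x\<in>X. if z = x then U x else 0)"
    by (rule sum.cong) auto
  then show ?thesis
    using assms by simp
qed

lemma sum_words_subst_entry:
  fixes P :: "'a::finite \<Rightarrow> 'a list pmf" and U :: "'a list \<Rightarrow> 'b::real_vector"
  assumes k: "1 \<le> k" and y: "length y = k" and nonempty: "\<And>a. [] \<notin> set_pmf (P a)"
  shows "(\<Sum>x\<in>words k. subst_entry P k x y *\<^sub>R U x) = subst_action k P U y"
proof -
  have head: "(\<Sum>x\<in>words k. (\<Sum>p<length \<eta>. of_bool (head_window k p \<eta> y = x)) *\<^sub>R U x)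
      = (\<Sum>p<length \<eta>. U (head_window k p \<eta> y))" for \<eta>
    unfolding scaleR_sum_left
    by (subst sum.swap)
       (auto intro!: sum.cong sum_of_bool_eq_scaleR finite_words head_window_in_words k y)
  have inner: "(\<Sum>x\<in>words k. of_bool (inner_window k j \<eta> y = x) *\<^sub>R U x) = U (inner_window k j \<eta> y)"
    if "\<eta> \<in> set_pmf (P a)" "j \<in> {1..<k}" for \<eta> j a
    using that nonempty
    by (intro sum_of_bool_eq_scaleR finite_words inner_window_in_words) (auto simp: y)
  have "(\<Sum>x\<in>words k. subst_entry P k x y *\<^sub>R U x)
      = fin_expectation (P (y ! 0))
          (\<lambda>\<eta>. \<Sum>x\<in>words k. (\<Sum>p<length \<eta>. of_bool (head_window k p \<eta> y = x)) *\<^sub>R U x)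
        + (\<Sum>j\<in>{1..<k}. fin_expectation (P (y ! j))
          (\<lambda>\<eta>. \<Sum>x\<in>words k. of_bool (inner_window k j \<eta> y = x) *\<^sub>R U x))"
    unfolding subst_entry_eq_fin_expectation scaleR_add_left sum.distrib
    by (simp only: scaleR_sum_left[where A = "{1..<k}"] sum.swap[where A = "words k"]
        sum_fin_expectation_scaleR)
  also have "\<dots> = subst_action k P U y"
    unfolding subst_action_def head
    by (intro arg_cong2[where f = "(+)"] refl sum.cong fin_expectation_cong inner) auto
  finally show ?thesis .
qed

lemma word_enum_bij:
  "bij_betw (word_enum k :: nat \<Rightarrow> 'a::finite list) {..<card (words k :: 'a list set)} (words k)"
proof -
  have "\<exists>f :: nat \<Rightarrow> 'a list. bij_betw f {..<card (words k :: 'a list set)} (words k)"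
    using ex_bij_betw_nat_finite[OF finite_words] by (simp add: atLeast0LessThan)
  then show ?thesis
    unfolding word_enum_def by (rule someI_ex)
qed

definition word_coeff :: "nat \<Rightarrow> complex vec \<Rightarrow> 'a::finite list \<Rightarrow> complex" where
  "word_coeff k u x =
     (if x \<in> words k then u $ inv_into {..<card (words k :: 'a list set)} (word_enum k) x else 0)"

lemma word_coeff_word_enum:
  fixes u :: "complex vec"
  assumes "i < card (words k :: 'a::finite list set)"
  shows "word_coeff k u (word_enum k i :: 'a::finite list) = u $ i"
  using word_enum_bij[where 'a = 'a and k = k] assms
  by (auto simp: word_coeff_def bij_betw_inv_into_left dest: bij_betwE)

lemma X_stat_eq_window_sum:
  fixes v :: "'a::finite list"
  assumes "dim_vec u = card (words k :: 'a list set)"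
  shows "X_stat k u v = window_sum k (word_coeff k u) v"
proof -
  let ?N = "card (words k :: 'a list set)" and ?e = "word_enum k :: nat \<Rightarrow> 'a list"
  have "X_stat k u v = (\<Sum>i<?N. u $ i * of_nat (ct v (?e i)))"
    unfolding X_stat_def assms
    by (simp add: of_real_sum sum_distrib_left flip: sum.distrib)
       (simp add: complex_eq_iff)
  also have "\<dots> = (\<Sum>x\<in>words k. word_coeff k u x * of_nat (ct v x))"
    by (simp add: sum.reindex_bij_betw[OF word_enum_bij, symmetric] word_coeff_word_enum)
  also have "\<dots> = (\<Sum>x\<in>words k. \<Sum>p\<in>{p\<in>{..<length v}. window k v p = x}. word_coeff k u (window k v p))"
    by (intro sum.cong refl)
       (auto simp: ct_def window_def words_def intro!: arg_cong[where f = card])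
  also have "\<dots> = window_sum k (word_coeff k u) v"
    unfolding window_sum_def by (rule sum.group[OF _ finite_words]) (auto simp: words_def)
  finally show ?thesis .
qed

lemma left_eigenvector_subst_matrix:
  fixes P :: "'a::finite \<Rightarrow> 'a list pmf"
  assumes "left_eigenvector (subst_matrix P k) u lam"
  shows "dim_vec u = card (words k :: 'a list set)" and "u \<noteq> 0\<^sub>v (dim_vec u)"
  using assms by (auto simp: left_eigenvector_def eigenvector_def subst_matrix_def)

lemma subst_action_left_eigenvector:
  fixes P :: "'a::finite \<Rightarrow> 'a list pmf"
  assumes k: "1 \<le> k" and nonempty: "\<And>a. [] \<notin> set_pmf (P a)"
    and u: "left_eigenvector (subst_matrix P k) u lam" and y: "y \<in> words k"
  shows "subst_action k P (word_coeff k u) y = lam * word_coeff k u y"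
proof -
  let ?N = "card (words k :: 'a list set)" and ?e = "word_enum k :: nat \<Rightarrow> 'a list"
  let ?A = "subst_matrix P k"
  have dim: "dim_row ?A = ?N" "dim_col ?A = ?N"
    by (simp_all add: subst_matrix_def)
  have "u \<in> carrier_vec ?N" and eig: "transpose_mat ?A *\<^sub>v u = lam \<cdot>\<^sub>v u"
    using u dim by (auto simp: left_eigenvector_def eigenvector_def)
  then have du: "dim_vec u = ?N"
    by simp
  obtain j where j: "j < ?N" and yj: "y = ?e j"
    using word_enum_bij[where 'a = 'a and k = k] y by (auto simp: bij_betw_def)
  have "(\<Sum>i<?N. subst_entry P k (?e i) (?e j) *\<^sub>R u $ i) = (transpose_mat ?A *\<^sub>v u) $ j"
    using j dim du
    by (simp add: scalar_prod_def atLeast0LessThan subst_matrix_def scaleR_conv_of_real mult.commute)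
  also have "\<dots> = lam * u $ j"
    using eig j du by simp
  finally have "(\<Sum>x\<in>words k. subst_entry P k x y *\<^sub>R word_coeff k u x) = lam * word_coeff k u y"
    by (simp add: sum.reindex_bij_betw[OF word_enum_bij, symmetric] word_coeff_word_enum j yj)
  moreover have "length y = k"
    using y by (simp add: words_def)
  ultimately show ?thesis
    using sum_words_subst_entry[where P = P, OF k _ nonempty] by metis
qed

lemma norm_subst_action_le:
  fixes U :: "'a list \<Rightarrow> 'b::real_normed_vector"
  assumes finite: "\<And>a. finite (set_pmf (P a))"
    and mean: "\<And>a. fin_expectation (P a) (\<lambda>\<eta>. real (length \<eta>)) = \<tau>"
    and bound: "\<And>x. norm (U x) \<le> B" and k: "1 \<le> k"
  shows "norm (subst_action k P U y) \<le> B * (\<tau> + real k - 1)"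
proof -
  have "norm (fin_expectation (P (y ! 0)) (\<lambda>\<eta>. \<Sum>p<length \<eta>. U (head_window k p \<eta> y)))
      \<le> fin_expectation (P (y ! 0)) (\<lambda>\<eta>. real (length \<eta>) * B)"
    by (intro norm_fin_expectation_le order_trans[OF norm_sum]
        order_trans[OF sum_bounded_above[where K = B]])
       (simp_all add: bound)
  also have "\<dots> = B * \<tau>"
    by (simp add: fin_expectation_mult_right mean)
  finally have head: "norm (fin_expectation (P (y ! 0)) (\<lambda>\<eta>. \<Sum>p<length \<eta>. U (head_window k p \<eta> y)))
      \<le> B * \<tau>" .
  have "norm (fin_expectation (P (y ! j)) (\<lambda>\<eta>. U (inner_window k j \<eta> y))) \<le> B" for j
    using norm_fin_expectation_le[of "P (y ! j)" "\<lambda>\<eta>. U (inner_window k j \<eta> y)" "\<lambda>_. B"]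
    by (simp add: bound fin_expectation_const finite)
  then have "norm (\<Sum>j\<in>{1..<k}. fin_expectation (P (y ! j)) (\<lambda>\<eta>. U (inner_window k j \<eta> y)))
      \<le> B * (real k - 1)"
    using k by (intro order_trans[OF norm_sum] order_trans[OF sum_bounded_above[where K = B]])
       (simp_all add: of_nat_diff mult.commute)
  with head have "norm (subst_action k P U y) \<le> B * \<tau> + B * (real k - 1)"
    unfolding subst_action_def by (intro order_trans[OF norm_triangle_ineq] add_mono)
  then show ?thesis
    by (simp add: algebra_simps)
qed

lemma word_coeff_max:
  fixes u :: "complex vec"
  assumes "dim_vec u = card (words k :: 'a::finite list set)" and "u \<noteq> 0\<^sub>v (dim_vec u)"
  shows "\<exists>y\<in>words k :: 'a list set. 0 < cmod (word_coeff k u y)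
           \<and> (\<forall>x::'a list. cmod (word_coeff k u x) \<le> cmod (word_coeff k u y))"
proof -
  let ?N = "card (words k :: 'a list set)" and ?e = "word_enum k :: nat \<Rightarrow> 'a list"
  have "\<exists>i<?N. u $ i \<noteq> 0"
  proof (rule ccontr)
    assume "\<not> (\<exists>i<?N. u $ i \<noteq> 0)"
    then have "u = 0\<^sub>v (dim_vec u)"
      using assms(1) by (intro eq_vecI) auto
    with assms(2) show False ..
  qed
  then obtain i where i: "i < ?N" and ui: "u $ i \<noteq> 0"
    by blast
  have ei: "?e i \<in> words k"
    using word_enum_bij[where 'a = 'a and k = k] i by (auto dest: bij_betwE)
  define S where "S = (\<lambda>x. cmod (word_coeff k u x)) ` (words k :: 'a list set)"
  have S: "finite S" "cmod (word_coeff k u (?e i)) \<in> S"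
    unfolding S_def using ei by (auto simp: finite_words)
  then have "Max S \<in> S"
    by (intro Max_in) auto
  then obtain y :: "'a list" where y: "y \<in> words k" and y_max: "Max S = cmod (word_coeff k u y)"
    unfolding S_def by blast
  have max: "cmod (word_coeff k u x) \<le> cmod (word_coeff k u y)" if "x \<in> words k" for x :: "'a list"
  proof -
    have "cmod (word_coeff k u x) \<in> S"
      unfolding S_def using that by (rule imageI)
    with S(1) show ?thesis
      unfolding y_max[symmetric] by (rule Max_ge)
  qed
  have "0 < cmod (word_coeff k u (?e i))"
    using ui i by (simp add: word_coeff_word_enum)
  then have pos: "0 < cmod (word_coeff k u y)"
    using max[OF ei] by linarith
  have "cmod (word_coeff k u x) \<le> cmod (word_coeff k u y)" for x :: "'a list"
    using max[of x] pos by (cases "x \<in> words k") (simp_all add: word_coeff_def)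
  with y pos show ?thesis
    by blast
qed

lemma Re_lt_of_cmod_le:
  assumes "cmod z \<le> r" and "z \<noteq> complex_of_real r"
  shows "Re z < r"
proof (rule ccontr)
  assume "\<not> Re z < r"
  with assms(1) complex_Re_le_cmod[of z] have "Re z = r" "cmod z = r"
    by linarith+
  then have "Im z = 0"
    using cmod_power2[of z] by simp
  with \<open>Re z = r\<close> assms(2) show False
    by (simp add: complex_eq_iff)
qed

lemma Re_eigenvalue_lt:
  fixes P :: "'a::finite \<Rightarrow> 'a list pmf"
  assumes avg: "avg_mutation_law P \<tau>" and k: "1 \<le> k"
    and u: "left_eigenvector (subst_matrix P k) u lam"
    and lam: "lam \<noteq> complex_of_real (\<tau> + real k - 1)"
  shows "Re lam < \<tau> + real k - 1"
proof -
  let ?U = "word_coeff k u :: 'a list \<Rightarrow> complex"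
  have finite: "\<And>a. finite (set_pmf (P a))" and nonempty: "\<And>a. [] \<notin> set_pmf (P a)"
    using avg by (auto simp: avg_mutation_law_def mutation_law_def)
  obtain y where y: "y \<in> words k" and pos: "0 < cmod (?U y)" and max: "\<And>x. cmod (?U x) \<le> cmod (?U y)"
    using word_coeff_max[OF left_eigenvector_subst_matrix[OF u]] by blast
  have "cmod lam * cmod (?U y) = cmod (subst_action k P ?U y)"
    by (simp add: subst_action_left_eigenvector[OF k nonempty u y] norm_mult)
  also have "\<dots> \<le> cmod (?U y) * (\<tau> + real k - 1)"
    by (rule norm_subst_action_le[OF finite avg_mutation_law_fin_expectation[OF avg] max k])
  finally have "cmod lam \<le> \<tau> + real k - 1"
    using pos by (simp add: mult.commute)
  from this lam show ?thesis
    by (rule Re_lt_of_cmod_le)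
qed

section \<open>Expected increment of the window sum\<close>

lemma mut_step_eq: "mut_step P v = pmf_of_set {..<length v} \<bind> (\<lambda>i. map_pmf (mutate v i) (P (v ! i)))"
  by (simp add: mut_step_def mutate_def[abs_def])

lemma set_pmf_mut_step:
  "v \<noteq> [] \<Longrightarrow> set_pmf (mut_step P v) = (\<Union>i<length v. mutate v i ` set_pmf (P (v ! i)))"
  by (simp add: mut_step_eq set_bind_pmf set_pmf_of_set lessThan_empty_iff)

lemma fin_expectation_mut_step:
  fixes g :: "'a list \<Rightarrow> 'd::{banach, second_countable_topology}"
  assumes "v \<noteq> []" and finite: "\<And>a. finite (set_pmf (P a))"
  shows "fin_expectation (mut_step P v) g
           = (\<Sum>i<length v. fin_expectation (P (v ! i)) (\<lambda>\<eta>. g (mutate v i \<eta>))) /\<^sub>R real (length v)"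
proof -
  have "fin_expectation (mut_step P v) g
      = fin_expectation (pmf_of_set {..<length v})
          (\<lambda>i. fin_expectation (map_pmf (mutate v i) (P (v ! i))) g)"
    unfolding mut_step_eq
    by (rule fin_expectation_bind_pmf) (use assms in \<open>auto simp: lessThan_empty_iff\<close>)
  also have "\<dots> = fin_expectation (pmf_of_set {..<length v})
      (\<lambda>i. fin_expectation (P (v ! i)) (\<lambda>\<eta>. g (mutate v i \<eta>)))"
    by (simp add: fin_expectation_map_pmf finite)
  also have "\<dots> = (\<Sum>i<length v. fin_expectation (P (v ! i)) (\<lambda>\<eta>. g (mutate v i \<eta>))) /\<^sub>R real (length v)"
    using fin_expectation_pmf_of_set[of "{..<length v}"] assms by (simp add: lessThan_empty_iff)
  finally show ?thesis .
qed

lemma fin_expectation_window_sum_mutate: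
  fixes U :: "'a list \<Rightarrow> 'b::real_vector"
  assumes k: "1 \<le> k" "k \<le> length v" and i: "i < length v"
    and finite: "\<And>a. finite (set_pmf (P a))" and nonempty: "\<And>a. [] \<notin> set_pmf (P a)"
  shows "fin_expectation (P (v ! i)) (\<lambda>\<eta>. window_sum k U (mutate v i \<eta>) - window_sum k U v)
    = fin_expectation (P (window k v i ! 0)) (\<lambda>\<eta>. \<Sum>p<length \<eta>. U (head_window k p \<eta> (window k v i)))
        - U (window k v i)
      + (\<Sum>j\<in>{1..<k}. fin_expectation (P (window k v (i + (length v - j)) ! j))
          (\<lambda>\<eta>. U (inner_window k j \<eta> (window k v (i + (length v - j)))))
        - U (window k v (i + (length v - j))))"
proof -
  have "window k v i ! 0 = v ! i"
    using k i by (simp add: nth_window)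
  moreover have "window k v (i + (length v - j)) ! j = v ! i" if "j < k" for j
    using k i that by (simp add: nth_window le_mod_geq)
  moreover have "fin_expectation (P (v ! i)) (\<lambda>\<eta>. window_sum k U (mutate v i \<eta>) - window_sum k U v)
      = fin_expectation (P (v ! i)) (\<lambda>\<eta>.
          (\<Sum>p<length \<eta>. U (head_window k p \<eta> (window k v i))) - U (window k v i)
          + (\<Sum>j\<in>{1..<k}. U (inner_window k j \<eta> (window k v (i + (length v - j))))
                           - U (window k v (i + (length v - j)))))"
    by (intro fin_expectation_cong window_sum_mutate[OF k i]) (use nonempty in blast)
  ultimately show ?thesis
    by (simp add: fin_expectation_add fin_expectation_diff fin_expectation_sum
        fin_expectation_const finite)
qed

lemma sum_fin_expectation_increment:
  fixes U :: "'a list \<Rightarrow> 'b::real_vector"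
  assumes k: "1 \<le> k" "k \<le> length v"
    and finite: "\<And>a. finite (set_pmf (P a))" and nonempty: "\<And>a. [] \<notin> set_pmf (P a)"
  shows "(\<Sum>i<length v. fin_expectation (P (v ! i))
            (\<lambda>\<eta>. window_sum k U (mutate v i \<eta>) - window_sum k U v))
         = (\<Sum>p<length v. subst_action k P U (window k v p) - real k *\<^sub>R U (window k v p))"
proof -
  let ?L = "length v"
  define H where
    "H y = fin_expectation (P (y ! 0)) (\<lambda>\<eta>. \<Sum>p<length \<eta>. U (head_window k p \<eta> y)) - U y"
    for y
  define T where "T j y = fin_expectation (P (y ! j)) (\<lambda>\<eta>. U (inner_window k j \<eta> y)) - U y" for j y
  have "(\<Sum>i<?L. fin_expectation (P (v ! i)) (\<lambda>\<eta>. window_sum k U (mutate v i \<eta>) - window_sum k U v))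
      = (\<Sum>i<?L. H (window k v i) + (\<Sum>j\<in>{1..<k}. T j (window k v (i + (?L - j)))))"
    by (intro sum.cong refl)
       (simp add: fin_expectation_window_sum_mutate[where P = P and U = U, OF k _ finite nonempty]
          H_def T_def)
  also have "\<dots> = (\<Sum>p<?L. H (window k v p)) + (\<Sum>j\<in>{1..<k}. \<Sum>i<?L. T j (window k v (?L - j + i)))"
    by (simp add: sum.distrib add.commute) (rule sum.swap)
  also have "\<dots> = (\<Sum>p<?L. H (window k v p) + (\<Sum>j\<in>{1..<k}. T j (window k v p)))"
  proof -
    have "(\<Sum>i<?L. T j (window k v (?L - j + i))) = (\<Sum>p<?L. T j (window k v p))" for j
      by (rule sum_lessThan_shift_periodic) (simp add: window_add_length)
    then show ?thesis
      by (simp add: sum.distrib) (rule sum.swap)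
  qed
  also have "\<dots> = (\<Sum>p<?L. subst_action k P U (window k v p) - real k *\<^sub>R U (window k v p))"
  proof -
    have "U y + (\<Sum>j\<in>{1..<k}. U y) = (1 + real (card {1..<k})) *\<^sub>R U y" for y
      by (simp add: sum_constant_scaleR scaleR_add_left)
    moreover have "1 + real (card {1..<k}) = real k"
      using k by simp
    ultimately show ?thesis
      by (simp add: H_def T_def subst_action_def sum_subtractf algebra_simps)
  qed
  finally show ?thesis .
qed

lemma fin_expectation_mut_step_increment:
  fixes U :: "'a list \<Rightarrow> complex"
  assumes k: "1 \<le> k" "k \<le> length v"
    and finite: "\<And>a. finite (set_pmf (P a))" and nonempty: "\<And>a. [] \<notin> set_pmf (P a)"
    and eig: "\<And>y. y \<in> words k \<Longrightarrow> subst_action k P U y = lam * U y"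
  shows "fin_expectation (mut_step P v) (\<lambda>z. window_sum k U z - window_sum k U v)
           = (lam - of_nat k) / of_nat (length v) * window_sum k U v"
proof -
  have v: "v \<noteq> []"
    using k by auto
  have "fin_expectation (mut_step P v) (\<lambda>z. window_sum k U z - window_sum k U v)
      = (\<Sum>p<length v. subst_action k P U (window k v p) - real k *\<^sub>R U (window k v p)) /\<^sub>R real (length v)"
    by (simp only: fin_expectation_mut_step[where P = P, OF v finite]
        sum_fin_expectation_increment[where P = P and U = U, OF k finite nonempty])
  also have "\<dots> = (\<Sum>p<length v. (lam - of_nat k) * U (window k v p)) /\<^sub>R real (length v)"
    by (intro arg_cong[where f = "\<lambda>z. z /\<^sub>R real (length v)"] sum.cong refl)
       (simp add: eig words_def scaleR_conv_of_real algebra_simps)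
  also have "\<dots> = (lam - of_nat k) / of_nat (length v) * window_sum k U v"
    by (simp add: window_sum_def sum_distrib_left scaleR_conv_of_real divide_inverse ac_simps)
  finally show ?thesis .
qed

lemma fin_expectation_mut_step_length:
  assumes v: "v \<noteq> []" and finite: "\<And>a. finite (set_pmf (P a))"
    and mean: "\<And>a. fin_expectation (P a) (\<lambda>\<eta>. real (length \<eta>)) = \<tau>"
  shows "fin_expectation (mut_step P v) (\<lambda>z. real (length z) - real (length v)) = \<tau> - 1"
proof -
  have "fin_expectation (P (v ! i)) (\<lambda>\<eta>. real (length (mutate v i \<eta>)) - real (length v)) = \<tau> - 1"
    if "i < length v" for i
  proof -
    have "fin_expectation (P (v ! i)) (\<lambda>\<eta>. real (length (mutate v i \<eta>)) - real (length v))
        = fin_expectation (P (v ! i)) (\<lambda>\<eta>. real (length \<eta>) - 1)"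
      using that by (intro fin_expectation_cong) (simp add: length_mutate of_nat_diff)
    then show ?thesis
      by (simp add: fin_expectation_diff fin_expectation_const finite mean)
  qed
  then show ?thesis
    using v by (simp add: fin_expectation_mut_step[where P = P, OF v finite])
qed

section \<open>A Lyapunov function\<close>

lemma inverse_square_le:
  fixes L t :: real
  assumes L: "L > 0" and t: "t \<ge> 0"
  shows "1 / (L + t)^2 \<le> 1 / L^2 - 2 * t / L^3 + 3 * t^2 / L^4"
proof -
  have "L^4 \<le> (L^2 - 2*t*L + 3*t^2) * (L+t)^2"
  proof -
    have "(L^2 - 2*t*L + 3*t^2) * (L+t)^2 = L^4 + 4*L*t^3 + 3*t^4"
      by (simp add: algebra_simps power2_eq_square power3_eq_cube power4_eq_xxxx)
    then show ?thesis
      using L t by simp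
  qed
  then have "1 / (L + t)^2 \<le> (L^2 - 2*t*L + 3*t^2) / L^4"
    using L t by (simp add: divide_simps)
  also have "\<dots> = 1 / L^2 - 2 * t / L^3 + 3 * t^2 / L^4"
    using L by (simp add: field_simps power2_eq_square power3_eq_cube power4_eq_xxxx)
  finally show ?thesis .
qed

lemma inverse_square_ge:
  fixes L t :: real
  assumes L: "L > 0" and t: "t \<ge> 0"
  shows "1 / L^2 - 2 * t / L^3 \<le> 1 / (L + t)^2"
proof -
  have "(L - 2*t) * (L+t)^2 = L^3 - 3*L*t^2 - 2*t^3"
    by (simp add: algebra_simps power2_eq_square power3_eq_cube)
  moreover have "0 \<le> 3*L*t^2" "0 \<le> 2*t^3"
    using L t by simp_all
  ultimately have "(L - 2*t) * (L+t)^2 \<le> L^3"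
    by linarith
  then have "(L - 2*t) / L^3 \<le> 1 / (L + t)^2"
    using L t by (simp add: divide_simps)
  also have "(L - 2*t) / L^3 = 1 / L^2 - 2 * t / L^3"
    using L by (simp add: field_simps power2_eq_square power3_eq_cube)
  finally show ?thesis .
qed

lemma square_div_square_le:
  fixes r L t M D :: real
  assumes L: "L > 0" and t: "0 \<le> t" "t \<le> D" and r: "0 \<le> r" "r \<le> M * L"
  shows "r^2 / (L + t)^2 \<le> r^2 / L^2 - 2 * r^2 * t / L^3 + 3 * M^2 * D^2 / L^2"
proof -
  have "r^2 / (L + t)^2 \<le> r^2 / L^2 - 2 * r^2 * t / L^3 + 3 * r^2 * t^2 / L^4"
    using mult_left_mono[OF inverse_square_le[OF L t(1)], of "r^2"] by (simp add: algebra_simps)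
  moreover have "r^2 * t^2 \<le> (M^2 * L^2) * D^2"
    using r t by (intro mult_mono power_mono) (auto simp flip: power_mult_distrib)
  then have "3 * r^2 * t^2 / L^4 \<le> 3 * M^2 * D^2 / L^2"
    using L by (simp add: field_simps power2_eq_square power4_eq_xxxx)
  ultimately show ?thesis
    by linarith
qed

lemma div_square_le:
  fixes x L t D K :: real
  assumes L: "L > 0" and t: "0 \<le> t" "t \<le> D" and x: "\<bar>x\<bar> \<le> K * L"
  shows "x / (L + t)^2 \<le> x / L^2 + 2 * K * D / L^2"
proof -
  have "1 / (L + t)^2 \<le> 1 / L^2" and "0 \<le> 2 * t / L^3"
    using L t by (simp_all add: divide_simps power_mono)
  moreover have "2 * t / L^3 \<le> 2 * D / L^3"
    using t L by (simp add: divide_right_mono)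
  ultimately have "\<bar>1 / (L + t)^2 - 1 / L^2\<bar> \<le> 2 * D / L^3"
    using inverse_square_ge[OF L t(1)] by linarith
  moreover have "0 \<le> K * L"
    using x abs_ge_zero[of x] by linarith
  ultimately have "\<bar>x\<bar> * \<bar>1 / (L + t)^2 - 1 / L^2\<bar> \<le> (K * L) * (2 * D / L^3)"
    using x by (intro mult_mono) auto
  moreover have "(K * L) * (2 * D / L^3) = 2 * K * D / L^2"
    using L by (simp add: field_simps power2_eq_square power3_eq_cube)
  moreover have "x / (L + t)^2 = x / L^2 + x * (1 / (L + t)^2 - 1 / L^2)"
    by (simp add: algebra_simps)
  moreover have "x * (1 / (L + t)^2 - 1 / L^2) \<le> \<bar>x\<bar> * \<bar>1 / (L + t)^2 - 1 / L^2\<bar>"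
    by (metis abs_ge_self abs_mult)
  ultimately show ?thesis
    by linarith
qed

lemma norm_add_square_div_le:
  fixes f d :: complex and L t M C D :: real
  assumes L: "L > 0" and t: "0 \<le> t" "t \<le> D" and f: "cmod f \<le> M * L" and d: "cmod d \<le> C"
  shows "(cmod (f + d))^2 / (L + t)^2 \<le> (cmod f)^2 / L^2 + 2 * Re (cnj f * d) / L^2
           - 2 * (cmod f)^2 * t / L^3 + (3 * M^2 * D^2 + 4 * M * C * D + C^2) / L^2"
proof -
  have expand: "(cmod (f + d))^2 = (cmod f)^2 + 2 * Re (cnj f * d) + (cmod d)^2"
    by (simp only: cmod_power2) (simp add: power2_eq_square algebra_simps)
  have "\<bar>Re (cnj f * d)\<bar> \<le> cmod f * cmod d"
    using abs_Re_le_cmod[of "cnj f * d"] by (simp add: norm_mult)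
  also have "\<dots> \<le> (M * C) * L"
    using f d by (simp add: mult_mono' mult.commute mult.left_commute)
  finally have cross: "Re (cnj f * d) / (L + t)^2 \<le> Re (cnj f * d) / L^2 + 2 * (M * C) * D / L^2"
    by (rule div_square_le[OF L t])
  have "(cmod d)^2 / (L + t)^2 \<le> C^2 / L^2"
    using L t d by (intro frac_le power_mono) auto
  moreover have "(cmod f)^2 / (L + t)^2
      \<le> (cmod f)^2 / L^2 - 2 * (cmod f)^2 * t / L^3 + 3 * M^2 * D^2 / L^2"
    using L t f by (intro square_div_square_le) auto
  moreover have "(cmod (f + d))^2 / (L + t)^2
      = (cmod f)^2 / (L + t)^2 + 2 * (Re (cnj f * d) / (L + t)^2) + (cmod d)^2 / (L + t)^2"
    unfolding expand by (simp add: add_divide_distrib)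
  moreover have "(3 * M^2 * D^2 + 4 * M * C * D + C^2) / L^2
      = 3 * M^2 * D^2 / L^2 + 2 * (2 * (M * C) * D / L^2) + C^2 / L^2"
    by (simp add: add_divide_distrib)
  moreover have "2 * Re (cnj f * d) / L^2 = 2 * (Re (cnj f * d) / L^2)"
    by simp
  ultimately show ?thesis
    using cross by linarith
qed

lemma div_add_le:
  fixes L t D A :: real
  assumes "L > 0" "0 \<le> t" "t \<le> D" "0 \<le> A"
  shows "A / (L + t) \<le> A / L - A * t / (L * (L + D))"
proof -
  have "L \<noteq> 0" "L + t \<noteq> 0"
    using assms by auto
  then have "A / L - A * t / (L * (L + t)) = (A * (L + t) - A * t) / (L * (L + t))"
    by (simp add: diff_divide_distrib)
  also have "A * (L + t) - A * t = L * A"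
    by (simp add: algebra_simps)
  finally have "A / (L + t) = A / L - A * t / (L * (L + t))"
    using \<open>L \<noteq> 0\<close> by simp
  moreover have "A * t / (L * (L + D)) \<le> A * t / (L * (L + t))"
    using assms by (intro divide_left_mono mult_left_mono mult_pos_pos) auto
  ultimately show ?thesis
    by linarith
qed

lemma lyapunov_term_le:
  fixes f d :: complex and L t M C D A :: real
  assumes L: "L > 0" and t: "0 \<le> t" "t \<le> D" and f: "cmod f \<le> M * L" and d: "cmod d \<le> C"
    and A: "0 \<le> A"
  shows "(cmod (f + d))^2 / (L + t)^2 + A / (L + t)
    \<le> ((cmod f)^2 + (3 * M^2 * D^2 + 4 * M * C * D + C^2)) / L^2 + A / L
       + 2 / L^2 * Re (cnj f * d) - (2 * (cmod f)^2 / L^3 + A / (L * (L + D))) * t"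
proof -
  have "(cmod (f + d))^2 / (L + t)^2 \<le> (cmod f)^2 / L^2 + 2 * Re (cnj f * d) / L^2
      - 2 * (cmod f)^2 * t / L^3 + (3 * M^2 * D^2 + 4 * M * C * D + C^2) / L^2"
    by (rule norm_add_square_div_le[OF L t f d])
  moreover have "A / (L + t) \<le> A / L - A * t / (L * (L + D))"
    by (rule div_add_le[OF L t A])
  ultimately show ?thesis
    by (simp add: algebra_simps add_divide_distrib)
qed

lemma lyapunov_coefficients_le:
  fixes h L D K A \<beta> r \<delta> \<mu> :: real
  assumes h: "0 \<le> h" and L: "L \<ge> 1" and D: "0 \<le> D" and \<beta>: "\<beta> > 0" and K: "1 \<le> K"
    and A: "A * \<beta> = 2 * K * (1 + D)" and r: "\<beta> = r * L + \<delta>"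
    and \<mu>: "\<mu> \<le> 2 * \<delta>" "\<mu> \<le> \<beta> / (2 * (1 + D))"
  shows "(h + (K - 1)) / L^2 + A / L + 2 / L^2 * (r * h) - (2 * h / L^3 + A / (L * (L + D))) * \<beta>
           \<le> (1 - \<mu> / L) * (h / L^2 + A / L)"
proof -
  have "A = 2 * K * (1 + D) / \<beta>"
    using A \<beta> by (simp add: eq_divide_eq)
  then have A0: "0 \<le> A"
    using K D \<beta> by simp
  have "2 / L^2 * (r * h) - 2 * h / L^3 * \<beta> = - 2 * \<delta> * h / L^3"
    using L unfolding r by (simp add: field_simps power2_eq_square power3_eq_cube)
  moreover have "- 2 * \<delta> * h / L^3 \<le> - \<mu> * h / L^3"
    using \<mu>(1) h L by (intro divide_right_mono mult_right_mono) auto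
  moreover have "(K - 1) / L^2 - A * \<beta> / (L * (L + D)) \<le> - \<mu> * A / L^2"
  proof -
    have "2 * K / L^2 = A * \<beta> / ((1 + D) * L^2)"
      unfolding A using D by simp
    also have "\<dots> \<le> A * \<beta> / (L * (L + D))"
    proof (rule divide_left_mono)
      show "L * (L + D) \<le> (1 + D) * L^2"
        using L D by (simp add: algebra_simps power2_eq_square mult_left_mono)
    qed (use L D A0 \<beta> in auto)
    finally have "2 * K / L^2 \<le> A * \<beta> / (L * (L + D))" .
    moreover have "\<mu> * A \<le> \<beta> / (2 * (1 + D)) * A"
      using \<mu>(2) A0 by (rule mult_right_mono)
    moreover have "\<beta> / (2 * (1 + D)) * A = K"
      using A D by (simp add: field_simps)
    ultimately have "\<mu> * A / L^2 \<le> K / L^2" and "2 * K / L^2 \<le> A * \<beta> / (L * (L + D))"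
      by (simp_all add: divide_right_mono)
    moreover have "(K - 1) / L^2 = K / L^2 - 1 / L^2" and "2 * K / L^2 = K / L^2 + K / L^2"
      by (simp_all add: diff_divide_distrib add_divide_distrib)
    moreover have "0 \<le> 1 / L^2"
      by simp
    ultimately show ?thesis
      by linarith
  qed
  ultimately show ?thesis
    by (simp add: algebra_simps add_divide_distrib diff_divide_distrib power2_eq_square power3_eq_cube)
qed

(* One step f \<mapsto> f + d of a walk in \<complex> whose clock L advances by t.  The drift c f with
   Re c L = \<beta> - \<delta> decreases |f|^2/L^2 at rate 2\<delta>/L^3, and A/L absorbs the O(1/L^2) errors. *)
lemma fin_expectation_lyapunov_le:
  fixes Q :: "'b pmf" and d :: "'b \<Rightarrow> complex" and t :: "'b \<Rightarrow> real"
  assumes finite: "finite (set_pmf Q)"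
    and t: "\<And>x. x \<in> set_pmf Q \<Longrightarrow> 0 \<le> t x \<and> t x \<le> D"
    and d: "\<And>x. x \<in> set_pmf Q \<Longrightarrow> cmod (d x) \<le> C"
    and drift: "fin_expectation Q d = c * f" and growth: "fin_expectation Q t = \<beta>"
    and f: "cmod f \<le> M * L" and L: "L \<ge> 1" and M: "0 \<le> M" and C: "0 \<le> C" and \<beta>: "\<beta> > 0"
    and c: "Re c * L = \<beta> - \<delta>" and \<mu>: "\<mu> \<le> 2 * \<delta>" "\<mu> \<le> \<beta> / (2 * (1 + D))"
  defines "A \<equiv> 2 * (3 * M^2 * D^2 + 4 * M * C * D + C^2 + 1) * (1 + D) / \<beta>"
  shows "fin_expectation Q (\<lambda>x. (cmod (f + d x))^2 / (L + t x)^2 + A / (L + t x))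
           \<le> (1 - \<mu> / L) * ((cmod f)^2 / L^2 + A / L)"
proof -
  define K where "K = 3 * M^2 * D^2 + 4 * M * C * D + C^2 + 1"
  define h where "h = (cmod f)^2"
  obtain x0 where "x0 \<in> set_pmf Q"
    using set_pmf_not_empty[of Q] by blast
  then have D: "0 \<le> D"
    using t by force
  have K: "1 \<le> K"
    using M C D by (simp add: K_def)
  have A: "A * \<beta> = 2 * K * (1 + D)"
    using \<beta> by (simp add: A_def K_def)
  have A0: "0 \<le> A"
    using K D \<beta> by (simp add: A_def K_def[symmetric])
  define a0 where "a0 = (h + (K - 1)) / L^2 + A / L"
  define a2 where "a2 = 2 * h / L^3 + A / (L * (L + D))"
  have "(cmod (f + d x))^2 / (L + t x)^2 + A / (L + t x) \<le> a0 + 2 / L^2 * Re (cnj f * d x) - a2 * t x"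
    if "x \<in> set_pmf Q" for x
    using lyapunov_term_le[of L "t x" D f M "d x" C A] t[OF that] d[OF that] f L A0
    by (simp add: a0_def a2_def h_def K_def)
  then have "fin_expectation Q (\<lambda>x. (cmod (f + d x))^2 / (L + t x)^2 + A / (L + t x))
      \<le> fin_expectation Q (\<lambda>x. a0 + 2 / L^2 * Re (cnj f * d x) - a2 * t x)"
    by (rule fin_expectation_mono)
  also have "\<dots> = a0 + 2 / L^2 * (Re c * h) - a2 * \<beta>"
  proof -
    have "cnj f * (c * f) = c * complex_of_real h"
      unfolding h_def complex_norm_square by (simp add: ac_simps)
    then have "Re (cnj f * (c * f)) = Re c * h"
      by (simp only:) simp
    then show ?thesis
      by (simp only: fin_expectation_add fin_expectation_diff fin_expectation_const[OF finite]
          fin_expectation_mult_left fin_expectation_Re drift growth)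
  qed
  also have "\<dots> \<le> (1 - \<mu> / L) * (h / L^2 + A / L)"
    unfolding a0_def a2_def
    by (rule lyapunov_coefficients_le[OF _ L D \<beta> K A _ \<mu>]) (use c in \<open>simp_all add: h_def\<close>)
  finally show ?thesis
    by (simp add: h_def)
qed

definition lyapunov :: "real \<Rightarrow> nat \<Rightarrow> ('a list \<Rightarrow> complex) \<Rightarrow> 'a list \<Rightarrow> real" where
  "lyapunov A k U z = (cmod (window_sum k U z))^2 / (real (length z))^2 + A / real (length z)"

lemma mut_step_lyapunov_le:
  fixes P :: "'a \<Rightarrow> 'a list pmf" and U :: "'a list \<Rightarrow> complex" and D :: nat
  assumes k: "1 \<le> k" "k \<le> length v"
    and finite: "\<And>a. finite (set_pmf (P a))" and nonempty: "\<And>a. [] \<notin> set_pmf (P a)"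
    and mean: "\<And>a. fin_expectation (P a) (\<lambda>\<eta>. real (length \<eta>)) = \<tau>"
    and lengths: "\<And>a \<eta>. \<eta> \<in> set_pmf (P a) \<Longrightarrow> length \<eta> \<le> D"
    and eig: "\<And>y. y \<in> words k \<Longrightarrow> subst_action k P U y = lam * U y"
    and bound: "\<And>x. cmod (U x) \<le> B" and \<tau>: "\<tau> > 1"
    and \<mu>: "\<mu> \<le> 2 * (\<tau> + real k - 1 - Re lam)" "\<mu> \<le> (\<tau> - 1) / (2 * (1 + real D))"
  defines "C \<equiv> (real D + 2 * real k) * B"
  defines "A \<equiv> 2 * (3 * B^2 * (real D)^2 + 4 * B * C * real D + C^2 + 1) * (1 + real D) / (\<tau> - 1)"
  shows "fin_expectation (mut_step P v) (lyapunov A k U) \<le> (1 - \<mu> / real (length v)) * lyapunov A k U v"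
proof -
  let ?L = "real (length v)" and ?f = "window_sum k U v"
  have v: "v \<noteq> []"
    using k by auto
  have B: "0 \<le> B"
    using bound[of undefined] norm_ge_zero[of "U undefined"] by linarith
  have "fin_expectation (mut_step P v) (\<lambda>z. (cmod (?f + (window_sum k U z - ?f)))^2
          / (?L + (real (length z) - ?L))^2 + A / (?L + (real (length z) - ?L)))
      \<le> (1 - \<mu> / ?L) * ((cmod ?f)^2 / ?L^2 + A / ?L)"
    unfolding A_def
  proof (rule fin_expectation_lyapunov_le[OF _ _ _
        fin_expectation_mut_step_increment[OF k finite nonempty eig]
        fin_expectation_mut_step_length[OF v finite mean]])
    show "finite (set_pmf (mut_step P v))"
      using v finite by (simp add: set_pmf_mut_step)
    fix z assume "z \<in> set_pmf (mut_step P v)"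
    then obtain i \<eta> where i: "i < length v" and \<eta>: "\<eta> \<in> set_pmf (P (v ! i))" and z: "z = mutate v i \<eta>"
      using v by (auto simp: set_pmf_mut_step)
    have "\<eta> \<noteq> []" and "length \<eta> \<le> D"
      using nonempty lengths \<eta> by blast+
    then show "0 \<le> real (length z) - ?L \<and> real (length z) - ?L \<le> real D"
      using i by (cases \<eta>) (auto simp: z length_mutate)
    have "cmod (window_sum k U z - ?f) \<le> (real (length \<eta>) + 2 * real k) * B"
      unfolding z by (rule norm_window_sum_mutate_le[OF k i \<open>\<eta> \<noteq> []\<close> bound])
    also have "\<dots> \<le> C"
      using \<open>length \<eta> \<le> D\<close> B by (simp add: C_def mult_right_mono)
    finally show "cmod (window_sum k U z - ?f) \<le> C" .
  next
    show "cmod ?f \<le> B * ?L"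
      using norm_window_sum_le[OF bound] by (simp add: mult.commute)
    show "Re ((lam - of_nat k) / of_nat (length v)) * ?L = \<tau> - 1 - (\<tau> + real k - 1 - Re lam)"
      using v by simp
  qed (use k \<tau> B \<mu> in \<open>simp_all add: C_def\<close>)
  then show ?thesis
    by (simp add: lyapunov_def[abs_def])
qed

section \<open>The mutation process\<close>

lemma ln_le_sum_divide:
  fixes \<mu> m D :: real
  assumes \<mu>: "0 \<le> \<mu>" and m: "1 \<le> m" and D: "0 \<le> D"
  shows "\<mu> / (m + D) * ln (real n + 1) \<le> (\<Sum>j<n. \<mu> / (m + D * real j))"
proof -
  have "\<mu> / (m + D) * ln (real n + 1) \<le> \<mu> / (m + D) * harm n"
    by (rule mult_left_mono[OF ln_le_harm]) (use \<mu> m D in simp)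
  also have "\<dots> = (\<Sum>j<n. \<mu> / (m + D) / (real j + 1))"
    by (simp add: harm_altdef sum_distrib_left divide_inverse add.commute)
  also have "\<dots> \<le> (\<Sum>j<n. \<mu> / (m + D * real j))"
  proof (rule sum_mono)
    fix j
    have "m + D * real j \<le> (m + D) * (real j + 1)" and "0 < m + D * real j"
      using m D by (simp_all add: algebra_simps add_pos_nonneg)
    then show "\<mu> / (m + D) / (real j + 1) \<le> \<mu> / (m + D * real j)"
      using \<mu> by (simp add: frac_le)
  qed
  finally show ?thesis .
qed

lemma decay_tendsto_zero:
  fixes e :: "nat \<Rightarrow> real" and \<mu> m D :: real
  assumes \<mu>: "\<mu> > 0" and m: "m \<ge> 1" and D: "D \<ge> 0"
    and e: "\<And>n. e n \<ge> 0" and decay: "\<And>n. e (Suc n) \<le> (1 - \<mu> / (m + D * real n)) * e n"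
  shows "e \<longlonglongrightarrow> 0"
proof -
  define c where "c = \<mu> / (m + D)"
  have c: "c > 0"
    using \<mu> m D by (simp add: c_def)
  have exp_bound: "e n \<le> e 0 * exp (- (\<Sum>j<n. \<mu> / (m + D * real j)))" for n
  proof (induction n)
    case (Suc n)
    have "1 - \<mu> / (m + D * real n) \<le> exp (- (\<mu> / (m + D * real n)))"
      using exp_ge_add_one_self[of "- (\<mu> / (m + D * real n))"] by simp
    then have "e (Suc n) \<le> exp (- (\<mu> / (m + D * real n))) * e n"
      using decay[of n] mult_right_mono[OF _ e[of n]] by (meson order_trans)
    also have "\<dots> \<le> exp (- (\<mu> / (m + D * real n))) * (e 0 * exp (- (\<Sum>j<n. \<mu> / (m + D * real j))))"
      using Suc by simp
    also have "\<dots> = e 0 * exp (- (\<Sum>j<Suc n. \<mu> / (m + D * real j)))"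
      by (simp add: exp_add[symmetric] algebra_simps)
    finally show ?case .
  qed simp
  have "exp (- (\<Sum>j<n. \<mu> / (m + D * real j))) \<le> (real n + 1) powr (- c)" for n
    using ln_le_sum_divide[of \<mu> m D n] \<mu> m D by (simp add: powr_def c_def)
  then have upper: "\<forall>\<^sub>F n in sequentially. e n \<le> e 0 * (real n + 1) powr (- c)"
    using exp_bound mult_left_mono[OF _ e[of 0]] by (intro always_eventually) (meson order_trans)
  have lower: "\<forall>\<^sub>F n in sequentially. 0 \<le> e n"
    by (simp add: always_eventually e)
  have "(\<lambda>n. e 0 * (real n + 1) powr (- c)) \<longlonglongrightarrow> 0"
  proof -
    have "filterlim (\<lambda>n. 1 + real n) at_top sequentially"
      by (rule filterlim_tendsto_add_at_top[OF tendsto_const filterlim_real_sequentially])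
    then have "filterlim (\<lambda>n. real n + 1) at_top sequentially"
      by (simp add: add.commute)
    then show ?thesis
      using c by (intro tendsto_mult_right_zero tendsto_neg_powr) simp_all
  qed
  with lower upper show ?thesis
    by (rule tendsto_sandwich[OF _ _ tendsto_const])
qed

lemma mutation_lengths_bounded:
  fixes P :: "'a::finite \<Rightarrow> 'a list pmf"
  assumes "\<And>a. finite (set_pmf (P a))"
  obtains D where "\<And>a \<eta>. \<eta> \<in> set_pmf (P a) \<Longrightarrow> length \<eta> \<le> D"
proof
  show "length \<eta> \<le> Max (\<Union>a. length ` set_pmf (P a))" if "\<eta> \<in> set_pmf (P a)" for a \<eta>
    using assms that by (intro Max_ge) auto
qed

lemma mut_system_support:
  fixes P :: "'a \<Rightarrow> 'a list pmf" and D :: nat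
  assumes finite: "\<And>a. finite (set_pmf (P a))" and nonempty: "\<And>a. [] \<notin> set_pmf (P a)"
    and lengths: "\<And>a \<eta>. \<eta> \<in> set_pmf (P a) \<Longrightarrow> length \<eta> \<le> D" and w: "w \<noteq> []"
  shows "finite (set_pmf (mut_system P w n))
    \<and> (\<forall>v\<in>set_pmf (mut_system P w n). length w \<le> length v \<and> length v \<le> length w + D * n)"
proof (induction n)
  case (Suc n)
  have v: "v \<noteq> []" if "v \<in> set_pmf (mut_system P w n)" for v
    using Suc that w by auto
  have "length w \<le> length v' \<and> length v' \<le> length w + D * Suc n"
    if v': "v' \<in> set_pmf (mut_system P w (Suc n))" for v'
  proof -
    obtain v i \<eta> where "v \<in> set_pmf (mut_system P w n)" and "i < length v"
      and "\<eta> \<in> set_pmf (P (v ! i))" and "v' = mutate v i \<eta>"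
      using v' v by (auto simp: set_bind_pmf set_pmf_mut_step)
    moreover from this have "\<eta> \<noteq> []" and "length \<eta> \<le> D"
      using nonempty lengths by blast+
    ultimately show ?thesis
      using Suc by (cases \<eta>) (auto simp: length_mutate)
  qed
  moreover have "finite (set_pmf (mut_system P w (Suc n)))"
    using Suc v finite by (auto simp: set_bind_pmf set_pmf_mut_step)
  ultimately show ?case
    by blast
qed simp

lemma length_mut_system_le:
  fixes P :: "'a \<Rightarrow> 'a list pmf" and D :: nat
  assumes finite: "\<And>a. finite (set_pmf (P a))" and nonempty: "\<And>a. [] \<notin> set_pmf (P a)"
    and lengths: "\<And>a \<eta>. \<eta> \<in> set_pmf (P a) \<Longrightarrow> length \<eta> \<le> D" and w: "w \<noteq> []"
    and \<tau>: "\<tau> > 1" and v: "v \<in> set_pmf (mut_system P w n)"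
  shows "real (length v) \<le> (1 + real D / (\<tau> - 1)) * (real n * (\<tau> - 1) + real (length w))"
proof -
  have "length v \<le> length w + D * n"
    using mut_system_support[where P = P and D = D and n = n] finite nonempty lengths w v by blast
  then have "real (length v) \<le> real (length w) + real D * real n"
    by (simp flip: of_nat_mult of_nat_add)
  moreover have "(1 + real D / (\<tau> - 1)) * (real n * (\<tau> - 1) + real (length w))
      = real n * (\<tau> - 1) + real (length w) + real D * real n + real D * real (length w) / (\<tau> - 1)"
    using \<tau> by (simp add: field_simps)
  moreover have "0 \<le> real n * (\<tau> - 1)" and "0 \<le> real D * real (length w) / (\<tau> - 1)"
    using \<tau> by simp_all
  ultimately show ?thesis
    by linarith
qed

lemma fin_expectation_mut_system_Suc:
  fixes g :: "'a list \<Rightarrow> 'd::{banach, second_countable_topology}"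
  assumes finite: "\<And>a. finite (set_pmf (P a))" and "finite (set_pmf (mut_system P w n))"
    and "[] \<notin> set_pmf (mut_system P w n)"
  shows "fin_expectation (mut_system P w (Suc n)) g
           = fin_expectation (mut_system P w n) (\<lambda>v. fin_expectation (mut_step P v) g)"
proof (simp, rule fin_expectation_bind_pmf)
  show "finite (set_pmf (mut_step P v))" if "v \<in> set_pmf (mut_system P w n)" for v
  proof -
    have "v \<noteq> []"
      using that assms(3) by blast
    then show ?thesis
      using finite by (simp add: set_pmf_mut_step)
  qed
qed (rule assms(2))

lemma mut_system_lyapunov_tendsto_zero:
  fixes P :: "'a \<Rightarrow> 'a list pmf" and \<Phi> :: "'a list \<Rightarrow> real" and D :: nat
  assumes finite: "\<And>a. finite (set_pmf (P a))" and nonempty: "\<And>a. [] \<notin> set_pmf (P a)"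
    and lengths: "\<And>a \<eta>. \<eta> \<in> set_pmf (P a) \<Longrightarrow> length \<eta> \<le> D" and w: "w \<noteq> []"
    and \<Phi>: "\<And>v. \<Phi> v \<ge> 0" and \<mu>: "\<mu> > 0"
    and step: "\<And>v. length w \<le> length v \<Longrightarrow>
                 fin_expectation (mut_step P v) \<Phi> \<le> (1 - \<mu> / real (length v)) * \<Phi> v"
  shows "(\<lambda>n. fin_expectation (mut_system P w n) \<Phi>) \<longlonglongrightarrow> 0"
proof (rule decay_tendsto_zero[OF \<mu>])
  let ?m = "real (length w)"
  show "?m \<ge> 1"
    using w by (simp add: Suc_le_eq)
  show "real D \<ge> 0"
    by simp
  show "fin_expectation (mut_system P w n) \<Phi> \<ge> 0" for n
    unfolding fin_expectation_def using \<Phi> by (simp add: sum_nonneg)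
  fix n
  have support: "finite (set_pmf (mut_system P w n))
      \<and> (\<forall>v\<in>set_pmf (mut_system P w n). length w \<le> length v \<and> length v \<le> length w + D * n)"
    by (rule mut_system_support) (use finite nonempty lengths w in auto)
  then have "[] \<notin> set_pmf (mut_system P w n)"
    using w by force
  with support have "fin_expectation (mut_system P w (Suc n)) \<Phi>
      = fin_expectation (mut_system P w n) (\<lambda>v. fin_expectation (mut_step P v) \<Phi>)"
    by (intro fin_expectation_mut_system_Suc finite) auto
  also have "\<dots> \<le> fin_expectation (mut_system P w n) (\<lambda>v. (1 - \<mu> / (?m + real D * real n)) * \<Phi> v)"
  proof (rule fin_expectation_mono)
    fix v assume "v \<in> set_pmf (mut_system P w n)"
    then have v: "length w \<le> length v" "real (length v) \<le> ?m + real D * real n"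
      using support by (auto simp flip: of_nat_mult of_nat_add)
    moreover have "0 < real (length v)"
      using w v(1) by (cases v) auto
    ultimately have "\<mu> / (?m + real D * real n) \<le> \<mu> / real (length v)"
      using \<mu> by (intro divide_left_mono mult_pos_pos) linarith+
    then have "(1 - \<mu> / real (length v)) * \<Phi> v \<le> (1 - \<mu> / (?m + real D * real n)) * \<Phi> v"
      by (intro mult_right_mono \<Phi>) simp
    with step[OF v(1)]
    show "fin_expectation (mut_step P v) \<Phi> \<le> (1 - \<mu> / (?m + real D * real n)) * \<Phi> v"
      by (rule order_trans)
  qed
  also have "\<dots> = (1 - \<mu> / (?m + real D * real n)) * fin_expectation (mut_system P w n) \<Phi>"
    by (rule fin_expectation_mult_left)
  finally show "fin_expectation (mut_system P w (Suc n)) \<Phi>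
      \<le> (1 - \<mu> / (?m + real D * real n)) * fin_expectation (mut_system P w n) \<Phi>" .
qed

lemma mut_system_lyapunov_decay:
  fixes P :: "'a::finite \<Rightarrow> 'a list pmf" and U :: "'a list \<Rightarrow> complex" and D :: nat
  assumes avg: "avg_mutation_law P \<tau>" and \<tau>: "\<tau> > 1" and k: "1 \<le> k" "k \<le> length w"
    and lengths: "\<And>a \<eta>. \<eta> \<in> set_pmf (P a) \<Longrightarrow> length \<eta> \<le> D"
    and eig: "\<And>y. y \<in> words k \<Longrightarrow> subst_action k P U y = lam * U y"
    and bound: "\<And>x. cmod (U x) \<le> B" and lam: "Re lam < \<tau> + real k - 1"
  obtains A where "0 \<le> A" and "(\<lambda>n. fin_expectation (mut_system P w n) (lyapunov A k U)) \<longlonglongrightarrow> 0"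
proof -
  have finite: "\<And>a. finite (set_pmf (P a))" and nonempty: "\<And>a. [] \<notin> set_pmf (P a)"
    using avg by (auto simp: avg_mutation_law_def mutation_law_def)
  have B: "0 \<le> B"
    using bound[of undefined] norm_ge_zero[of "U undefined"] by linarith
  define \<mu> where "\<mu> = min (2 * (\<tau> + real k - 1 - Re lam)) ((\<tau> - 1) / (2 * (1 + real D)))"
  define C where "C = (real D + 2 * real k) * B"
  define A where "A = 2 * (3 * B^2 * (real D)^2 + 4 * B * C * real D + C^2 + 1) * (1 + real D) / (\<tau> - 1)"
  have A0: "0 \<le> A"
    using B \<tau> by (simp add: A_def C_def)
  have \<mu>: "\<mu> > 0"
    using lam \<tau> by (simp add: \<mu>_def)
  have nonneg: "\<And>v. lyapunov A k U v \<ge> 0"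
    using A0 by (simp add: lyapunov_def)
  have step: "fin_expectation (mut_step P v) (lyapunov A k U)
      \<le> (1 - \<mu> / real (length v)) * lyapunov A k U v" if "length w \<le> length v" for v
    unfolding A_def C_def using k that
    by (intro mut_step_lyapunov_le[where P = P, OF _ _ finite nonempty
          avg_mutation_law_fin_expectation[OF avg] lengths eig bound \<tau>]) (auto simp: \<mu>_def)
  have w: "w \<noteq> []"
    using k by auto
  have "(\<lambda>n. fin_expectation (mut_system P w n) (lyapunov A k U)) \<longlonglongrightarrow> 0"
    by (rule mut_system_lyapunov_tendsto_zero[where P = P and D = D,
          OF finite nonempty lengths w nonneg \<mu> step])
  with A0 show ?thesis
    by (rule that)
qed

lemma prob_window_sum_le:
  fixes M :: "'a list pmf" and U :: "'a list \<Rightarrow> complex"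
  assumes finite: "finite (set_pmf M)" and A: "0 \<le> A" and N: "0 < N" and \<epsilon>: "0 < \<epsilon>"
    and lengths: "\<And>v. v \<in> set_pmf M \<Longrightarrow> 0 < length v \<and> real (length v) \<le> c * N"
  shows "measure_pmf.prob M {v. \<epsilon> < cmod (window_sum k U v / complex_of_real N)}
           \<le> (c / \<epsilon>)^2 * fin_expectation M (lyapunov A k U)"
proof -
  have nonneg: "0 \<le> lyapunov A k U v" for v
    using A by (simp add: lyapunov_def)
  have "1 \<le> (c / \<epsilon>)^2 * lyapunov A k U v"
    if v: "v \<in> set_pmf M" and gt: "\<epsilon> < cmod (window_sum k U v / complex_of_real N)" for v
  proof -
    let ?L = "real (length v)" and ?x = "cmod (window_sum k U v)"
    have L: "0 < ?L" "?L \<le> c * N"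
      using lengths[OF v] by simp_all
    have "\<epsilon> < ?x / N"
      using gt N by (simp add: norm_divide)
    also have "\<dots> \<le> c * (?x / ?L)"
    proof -
      have "?L * ?x \<le> (c * N) * ?x"
        using L(2) by (rule mult_right_mono) simp
      then show ?thesis
        using L N by (simp add: field_simps)
    qed
    finally have "\<epsilon>^2 \<le> c^2 * (?x^2 / ?L^2)"
      using \<epsilon> by (simp add: power_strict_mono less_imp_le flip: power_mult_distrib power_divide)
    also have "\<dots> \<le> c^2 * lyapunov A k U v"
      using A L by (intro mult_left_mono) (simp_all add: lyapunov_def)
    finally show ?thesis
      using \<epsilon> by (simp add: field_simps power_divide)
  qed
  then show ?thesis
    using nonneg \<epsilon> finite
    by (subst fin_expectation_mult_left[symmetric], intro prob_le_fin_expectation) auto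
qed

lemma prob_window_sum_tendsto_zero:
  fixes P :: "'a::finite \<Rightarrow> 'a list pmf" and U :: "'a list \<Rightarrow> complex"
  assumes avg: "avg_mutation_law P \<tau>" and \<tau>: "\<tau> > 1" and k: "1 \<le> k" "k \<le> length w"
    and eig: "\<And>y. y \<in> words k \<Longrightarrow> subst_action k P U y = lam * U y"
    and bound: "\<And>x. cmod (U x) \<le> B" and lam: "Re lam < \<tau> + real k - 1" and \<epsilon>: "\<epsilon> > 0"
  shows "(\<lambda>n. measure_pmf.prob (mut_system P w n)
            {v. \<epsilon> < cmod (window_sum k U v / complex_of_real (real n * (\<tau> - 1) + real (length w)))})
         \<longlonglongrightarrow> 0"
proof -
  have finite: "\<And>a. finite (set_pmf (P a))" and nonempty: "\<And>a. [] \<notin> set_pmf (P a)"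
    using avg by (auto simp: avg_mutation_law_def mutation_law_def)
  obtain D where lengths: "\<And>a \<eta>. \<eta> \<in> set_pmf (P a) \<Longrightarrow> length \<eta> \<le> D"
    using mutation_lengths_bounded[of P] finite by metis
  obtain A where A: "0 \<le> A" and E: "(\<lambda>n. fin_expectation (mut_system P w n) (lyapunov A k U)) \<longlonglongrightarrow> 0"
    by (rule mut_system_lyapunov_decay[where P = P and D = D, OF avg \<tau> k lengths eig bound lam])
  define c where "c = 1 + real D / (\<tau> - 1)"
  have lim: "(\<lambda>n. (c / \<epsilon>)^2 * fin_expectation (mut_system P w n) (lyapunov A k U)) \<longlonglongrightarrow> 0"
    using E by (rule tendsto_mult_right_zero)
  have w: "w \<noteq> []"
    using k by auto
  have "measure_pmf.prob (mut_system P w n)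
          {v. \<epsilon> < cmod (window_sum k U v / complex_of_real (real n * (\<tau> - 1) + real (length w)))}
        \<le> (c / \<epsilon>)^2 * fin_expectation (mut_system P w n) (lyapunov A k U)" for n
  proof (rule prob_window_sum_le[OF _ A _ \<epsilon>])
    have support: "finite (set_pmf (mut_system P w n))
      \<and> (\<forall>v\<in>set_pmf (mut_system P w n). length w \<le> length v \<and> length v \<le> length w + D * n)"
      by (rule mut_system_support) (use finite nonempty lengths w in auto)
    then show "finite (set_pmf (mut_system P w n))"
      by blast
    show "0 < real n * (\<tau> - 1) + real (length w)"
      using \<tau> w by (simp add: add_nonneg_pos)
    fix v assume v: "v \<in> set_pmf (mut_system P w n)"
    then have "0 < length v"
      using support w by (cases v) auto
    moreover have "real (length v) \<le> c * (real n * (\<tau> - 1) + real (length w))"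
      unfolding c_def by (rule length_mut_system_le[OF finite nonempty lengths w \<tau> v])
    ultimately show "0 < length v \<and> real (length v) \<le> c * (real n * (\<tau> - 1) + real (length w))"
      by blast
  qed
  then have "\<forall>\<^sub>F n in sequentially. measure_pmf.prob (mut_system P w n)
          {v. \<epsilon> < cmod (window_sum k U v / complex_of_real (real n * (\<tau> - 1) + real (length w)))}
        \<le> (c / \<epsilon>)^2 * fin_expectation (mut_system P w n) (lyapunov A k U)"
    by (simp add: always_eventually)
  then show ?thesis
    by (intro tendsto_sandwich[OF _ _ tendsto_const lim]) simp_all
qed

theorem mainTheorem12:
  fixes P :: "'a::finite \<Rightarrow> 'a list pmf" and \<tau> :: real and k :: nat
    and w :: "'a list" and lam :: complex and u :: "complex vec"
  assumes "avg_mutation_law P \<tau>" and "\<tau> > 1" and "k \<ge> 1" and "length w \<ge> k"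
    and "alg_mult (subst_matrix P k) (complex_of_real (\<tau> + real k - 1)) = 1"
    and "lam \<noteq> complex_of_real (\<tau> + real k - 1)"
    and "left_eigenvector (subst_matrix P k) u lam"
  shows "\<forall>\<epsilon>>0. (\<lambda>n. measure_pmf.prob (mut_system P w n)
            {v. cmod (X_stat k u v / complex_of_real (real n * (\<tau> - 1) + real (length w))) > \<epsilon>})
          \<longlonglongrightarrow> 0"
proof (intro allI impI)
  fix \<epsilon> :: real
  assume \<epsilon>: "\<epsilon> > 0"
  note avg = assms(1) and k = assms(3) and u = assms(7)
  let ?U = "word_coeff k u :: 'a list \<Rightarrow> complex"
  have nonempty: "\<And>a. [] \<notin> set_pmf (P a)"
    using avg by (auto simp: avg_mutation_law_def mutation_law_def)
  obtain y where bound: "\<And>x. cmod (?U x) \<le> cmod (?U y)"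
    using word_coeff_max[OF left_eigenvector_subst_matrix[OF u]] by blast
  have "X_stat k u v = window_sum k ?U v" for v
    using X_stat_eq_window_sum left_eigenvector_subst_matrix(1)[OF u] by blast
  then show "(\<lambda>n. measure_pmf.prob (mut_system P w n)
      {v. cmod (X_stat k u v / complex_of_real (real n * (\<tau> - 1) + real (length w))) > \<epsilon>}) \<longlonglongrightarrow> 0"
    using prob_window_sum_tendsto_zero[OF avg assms(2) k assms(4)
        subst_action_left_eigenvector[OF k nonempty u] bound Re_eigenvalue_lt[OF avg k u assms(6)] \<epsilon>]
    by simp
qed

end
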